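(* Let $\mathcal{T}=\mathcal{X}=\mathcal{Y}=\{0,1\}$ and $P\in\Delta_{\mathcal{T},\mathcal{X},\mathcal{Y}}$ with $P(T=0)>0$, $P(T=1)>0$. Set $b=P(X=0\mid T=0)$, $c=P(X=0\mid T=1)$, $d=P(Y=0\mid T=0)$, $e=P(Y=0\mid T=1)$. Then $\arg\max_{Q\in\Delta_P}H_Q(T\mid X,Y)$ consists of a single point unless $b=c$ and $d=e$.
   Context: $\Delta_{\mathcal{T},\mathcal{X},\mathcal{Y}}$ is the set of all joint distributions of $(T,X,Y)$. For $P$, $\Delta_P=\{Q\in\Delta_{\mathcal{T},\mathcal{X},\mathcal{Y}}: Q(X=x,T=t)=P(X=x,T=t),\ Q(Y=y,T=t)=P(Y=y,T=t)\ \forall x,y,t\}$. $H_Q(T\mid X,Y)$ is the conditional entropy under $Q$. *)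

theory Defs
  imports Complex_Main
begin

text \<open>A joint distribution of (T,X,Y) on {0,1}^3 is represented as a function
  Q t x y = Q(T=t, X=x, Y=y), nonnegative, vanishing outside {0,1}^3, summing to 1.\<close>

definition joint_dists :: "(nat \<Rightarrow> nat \<Rightarrow> nat \<Rightarrow> real) set" where
  "joint_dists = {Q. (\<forall>t x y. 0 \<le> Q t x y)
      \<and> (\<forall>t x y. Q t x y \<noteq> 0 \<longrightarrow> t \<in> {0,1} \<and> x \<in> {0,1} \<and> y \<in> {0,1})
      \<and> (\<Sum>t\<in>{0,1}. \<Sum>x\<in>{0,1}. \<Sum>y\<in>{0,1}. Q t x y) = 1}"

definition marg_XT :: "(nat \<Rightarrow> nat \<Rightarrow> nat \<Rightarrow> real) \<Rightarrow> nat \<Rightarrow> nat \<Rightarrow> real" where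
  "marg_XT Q x t = (\<Sum>y\<in>{0,1}. Q t x y)"

definition marg_YT :: "(nat \<Rightarrow> nat \<Rightarrow> nat \<Rightarrow> real) \<Rightarrow> nat \<Rightarrow> nat \<Rightarrow> real" where
  "marg_YT Q y t = (\<Sum>x\<in>{0,1}. Q t x y)"

definition marg_XY :: "(nat \<Rightarrow> nat \<Rightarrow> nat \<Rightarrow> real) \<Rightarrow> nat \<Rightarrow> nat \<Rightarrow> real" where
  "marg_XY Q x y = (\<Sum>t\<in>{0,1}. Q t x y)"

definition marg_T :: "(nat \<Rightarrow> nat \<Rightarrow> nat \<Rightarrow> real) \<Rightarrow> nat \<Rightarrow> real" where
  "marg_T Q t = (\<Sum>x\<in>{0,1}. \<Sum>y\<in>{0,1}. Q t x y)"

definition Delta_P :: "(nat \<Rightarrow> nat \<Rightarrow> nat \<Rightarrow> real) \<Rightarrow> (nat \<Rightarrow> nat \<Rightarrow> nat \<Rightarrow> real) set" where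
  "Delta_P P = {Q \<in> joint_dists. (\<forall>x t. marg_XT Q x t = marg_XT P x t)
                                 \<and> (\<forall>y t. marg_YT Q y t = marg_YT P y t)}"

definition cond_entropy :: "(nat \<Rightarrow> nat \<Rightarrow> nat \<Rightarrow> real) \<Rightarrow> real" where
  "cond_entropy Q = - (\<Sum>t\<in>{0,1}. \<Sum>x\<in>{0,1}. \<Sum>y\<in>{0,1}.
      (if Q t x y = 0 then 0 else Q t x y * log 2 (Q t x y / marg_XY Q x y)))"

definition argmax_cond_entropy :: "(nat \<Rightarrow> nat \<Rightarrow> nat \<Rightarrow> real) \<Rightarrow> (nat \<Rightarrow> nat \<Rightarrow> nat \<Rightarrow> real) set" where
  "argmax_cond_entropy P = {Q \<in> Delta_P P. \<forall>Q' \<in> Delta_P P. cond_entropy Q' \<le> cond_entropy Q}"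

end

theory Submission
  imports Defs "HOL-Analysis.Analysis" "HOL-Real_Asymp.Real_Asymp"
begin

text \<open>
  Writing \<open>H_Q(T | X,Y)\<close> as a sum over the cells \<open>(x,y)\<close> of the entropy of splitting the mass
  \<open>Q(x,y)\<close> between \<open>T = 0\<close> and \<open>T = 1\<close>, it becomes a sum of concave functions of the pairs
  \<open>(Q(0,x,y), Q(1,x,y))\<close>; the log-sum inequality shows that each is strictly concave except
  along rays. The set \<open>\<Delta>_P\<close> is a compact two-parameter family (one parameter per value of
  \<open>T\<close>), so a maximiser exists. If \<open>Q\<^sub>1 \<noteq> Q\<^sub>2\<close> were two maximisers, their midpoint would do
  no better, which forces \<open>(Q\<^sub>1(0,x,y), Q\<^sub>1(1,x,y))\<close> and \<open>(Q\<^sub>2(0,x,y), Q\<^sub>2(1,x,y))\<close> to be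
  proportional in every cell. Since \<open>Q\<^sub>2 - Q\<^sub>1\<close> has the form \<open>(\<plusminus>d\<^sub>0, \<plusminus>d\<^sub>1)\<close> in each cell, this
  makes \<open>T\<close> independent of \<open>(X,Y)\<close> under \<open>Q\<^sub>1\<close>, whence \<open>b = c\<close> and \<open>d = e\<close>.
\<close>

definition split_entropy :: "real \<Rightarrow> real \<Rightarrow> real" where
  "split_entropy a b = (a + b) * ln (a + b) - a * ln a - b * ln b"

lemma split_entropy_eq_log_terms:
  assumes "0 \<le> a" "0 \<le> b"
  shows "(if a = 0 then 0 else a * log 2 (a / (a + b)))
       + (if b = 0 then 0 else b * log 2 (b / (a + b))) = - split_entropy a b / ln 2"
  using assms
  by (cases "a = 0"; cases "b = 0")
     (simp_all add: split_entropy_def log_def ln_divide_pos field_simps)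

lemma continuous_on_x_ln_x: "continuous_on {0..} (\<lambda>x::real. x * ln x)"
proof -
  have "continuous (at x within {0..}) (\<lambda>x::real. x * ln x)" if "0 \<le> x" for x
  proof (cases "x = 0")
    case True
    have "((\<lambda>x::real. x * ln x) \<longlongrightarrow> 0) (at_right 0)"
      by real_asymp
    then show ?thesis
      using True by (simp add: continuous_within at_within_Ici_at_right)
  next
    case False
    with that have "continuous (at x) (\<lambda>x::real. x * ln x)"
      by (intro continuous_intros) auto
    then show ?thesis
      using continuous_at_imp_continuous_at_within by blast
  qed
  then show ?thesis
    using continuous_on_eq_continuous_within by blast
qed

lemma continuous_on_split_entropy:
  assumes "continuous_on K f" "continuous_on K g" "\<forall>z\<in>K. 0 \<le> f z" "\<forall>z\<in>K. 0 \<le> g z"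
  shows "continuous_on K (\<lambda>z. split_entropy (f z) (g z))"
proof -
  have x_ln_x: "continuous_on K (\<lambda>z. h z * ln (h z))"
    if "continuous_on K h" "\<forall>z\<in>K. 0 \<le> h z" for h :: "_ \<Rightarrow> real"
    by (rule continuous_on_compose2[OF continuous_on_x_ln_x that(1)]) (use that(2) in auto)
  show ?thesis
    unfolding split_entropy_def using assms
    by (intro continuous_intros x_ln_x) auto
qed

lemma mult_ln_ratio_ge:
  fixes u m c :: real
  assumes "0 < c" "0 \<le> u" "0 \<le> m" "0 < u \<Longrightarrow> 0 < m"
  shows "u - m * c \<le> u * (ln u - ln m - ln c)"
    and "u * (ln u - ln m - ln c) = u - m * c \<Longrightarrow> u = m * c"
proof -
  have "u - m * c \<le> u * (ln u - ln m - ln c) \<and> (u * (ln u - ln m - ln c) = u - m * c \<longrightarrow> u = m * c)"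
  proof (cases "u = 0")
    case True
    then show ?thesis using assms by simp
  next
    case False
    with assms have pos: "0 < u" "0 < m" by auto
    define y where "y = m * c / u"
    have y: "0 < y" using pos assms(1) by (simp add: y_def)
    have "ln u - ln m - ln c = - ln y"
      using pos assms(1) by (simp add: y_def ln_div ln_mult)
    moreover have "u - m * c = u * (1 - y)"
      using pos by (simp add: y_def field_simps)
    moreover have "u * (1 - y) \<le> u * (- ln y)"
      using ln_le_minus_one[OF y] pos by (intro mult_left_mono) auto
    moreover have "u = m * c" if "u * (- ln y) = u * (1 - y)"
    proof -
      have "u * (ln y - (y - 1)) = 0" using that by (simp add: algebra_simps)
      then have "ln y = y - 1" using pos by simp
      then have "y = 1" using ln_eq_minus_one[OF y] by blast
      then show ?thesis using pos by (simp add: y_def field_simps)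
    qed
    ultimately show ?thesis by auto
  qed
  then show "u - m * c \<le> u * (ln u - ln m - ln c)"
    and "u * (ln u - ln m - ln c) = u - m * c \<Longrightarrow> u = m * c"
    by auto
qed

text \<open>Stated with weighted \<open>ln\<close> differences, so that zero weights are harmless (\<open>ln 0 = 0\<close> in Isabelle).\<close>
lemma log_sum_inequality:
  fixes u0 u1 m0 m1 :: real
  assumes "0 \<le> u0" "0 \<le> u1" "0 \<le> m0" "0 \<le> m1" "0 < m0 + m1"
    and "0 < u0 \<Longrightarrow> 0 < m0" "0 < u1 \<Longrightarrow> 0 < m1"
  shows "(u0 + u1) * (ln (u0 + u1) - ln (m0 + m1)) \<le> u0 * (ln u0 - ln m0) + u1 * (ln u1 - ln m1)"
    and "(u0 + u1) * (ln (u0 + u1) - ln (m0 + m1)) = u0 * (ln u0 - ln m0) + u1 * (ln u1 - ln m1)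
           \<Longrightarrow> u0 * (m0 + m1) = m0 * (u0 + u1) \<and> u1 * (m0 + m1) = m1 * (u0 + u1)"
proof -
  let ?U = "u0 + u1" and ?M = "m0 + m1"
  let ?lhs = "?U * (ln ?U - ln ?M)" and ?rhs = "u0 * (ln u0 - ln m0) + u1 * (ln u1 - ln m1)"
  have "?lhs \<le> ?rhs \<and> (?lhs = ?rhs \<longrightarrow> u0 * ?M = m0 * ?U \<and> u1 * ?M = m1 * ?U)"
  proof (cases "?U = 0")
    case True
    with assms(1,2) have "u0 = 0" "u1 = 0" by simp_all
    then show ?thesis by simp
  next
    case False
    define c where "c = ?U / ?M"
    with False assms have c: "0 < c" by simp
    have ln_c: "ln c = ln ?U - ln ?M"
      using False assms(1,2,5) by (simp add: c_def ln_div)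
    have diff: "?rhs - ?lhs = u0 * (ln u0 - ln m0 - ln c) + u1 * (ln u1 - ln m1 - ln c)"
      unfolding ln_c by (simp add: algebra_simps)
    have bounds: "(u0 - m0 * c) + (u1 - m1 * c) = 0"
      using assms(5) by (simp add: c_def field_simps)
    have t0: "u0 - m0 * c \<le> u0 * (ln u0 - ln m0 - ln c)"
      "u0 * (ln u0 - ln m0 - ln c) = u0 - m0 * c \<Longrightarrow> u0 = m0 * c"
      using mult_ln_ratio_ge[of c u0 m0] c assms(1,3,6) by auto
    have t1: "u1 - m1 * c \<le> u1 * (ln u1 - ln m1 - ln c)"
      "u1 * (ln u1 - ln m1 - ln c) = u1 - m1 * c \<Longrightarrow> u1 = m1 * c"
      using mult_ln_ratio_ge[of c u1 m1] c assms(2,4,7) by auto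
    have "u0 * ?M = m0 * ?U \<and> u1 * ?M = m1 * ?U" if "?lhs = ?rhs"
    proof -
      have "u0 = m0 * c" "u1 = m1 * c"
        using t0 t1 diff bounds that by linarith+
      moreover have "c * ?M = ?U"
        using assms(5) by (simp add: c_def)
      ultimately show ?thesis
        by (metis mult.assoc)
    qed
    then show ?thesis
      using t0(1) t1(1) diff bounds by linarith
  qed
  then show "?lhs \<le> ?rhs" and "?lhs = ?rhs \<Longrightarrow> u0 * ?M = m0 * ?U \<and> u1 * ?M = m1 * ?U"
    by auto
qed

text \<open>
  With \<open>m = (u + v) / 2\<close> the concavity gap splits as the sum of the log-sum gaps of \<open>u\<close>
  and of \<open>v\<close> against \<open>m\<close>.
\<close>
lemma split_entropy_midpoint:
  fixes u0 u1 v0 v1 :: real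
  assumes "0 \<le> u0" "0 \<le> u1" "0 \<le> v0" "0 \<le> v1"
  shows "split_entropy u0 u1 + split_entropy v0 v1 \<le> 2 * split_entropy ((u0 + v0) / 2) ((u1 + v1) / 2)"
    and "split_entropy u0 u1 + split_entropy v0 v1 = 2 * split_entropy ((u0 + v0) / 2) ((u1 + v1) / 2)
           \<Longrightarrow> u0 * v1 = u1 * v0"
proof -
  define m0 where "m0 = (u0 + v0) / 2"
  define m1 where "m1 = (u1 + v1) / 2"
  define M where "M = m0 + m1"
  define gap where "gap = 2 * split_entropy m0 m1 - split_entropy u0 u1 - split_entropy v0 v1"
  have "0 \<le> gap \<and> (gap = 0 \<longrightarrow> u0 * v1 = u1 * v0)"
  proof (cases "M = 0")
    case True
    with assms have "u0 = 0 \<and> u1 = 0 \<and> v0 = 0 \<and> v1 = 0"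
      unfolding M_def m0_def m1_def by (simp add: field_simps add_nonneg_eq_0_iff)
    then show ?thesis by (simp add: gap_def split_entropy_def m0_def m1_def)
  next
    case False
    with assms have M: "0 < m0 + m1" by (simp add: M_def m0_def m1_def field_simps)
    have m: "0 \<le> m0" "0 \<le> m1" "0 < u0 \<Longrightarrow> 0 < m0" "0 < u1 \<Longrightarrow> 0 < m1"
      "0 < v0 \<Longrightarrow> 0 < m0" "0 < v1 \<Longrightarrow> 0 < m1"
      using assms by (simp_all add: m0_def m1_def)
    note u = log_sum_inequality[OF assms(1,2) m(1,2) M m(3,4), folded M_def]
      and v = log_sum_inequality[OF assms(3,4) m(1,2) M m(5,6), folded M_def]
    have "2 * m0 = u0 + v0" "2 * m1 = u1 + v1" "2 * M = (u0 + u1) + (v0 + v1)"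
      by (simp_all add: M_def m0_def m1_def field_simps)
    then have "2 * (m0 * ln m0) = u0 * ln m0 + v0 * ln m0" "2 * (m1 * ln m1) = u1 * ln m1 + v1 * ln m1"
      "2 * (M * ln M) = (u0 + u1) * ln M + (v0 + v1) * ln M"
      by (simp_all only: mult.assoc[symmetric] distrib_right)
    then have gap_eq: "gap = (u0 * (ln u0 - ln m0) + u1 * (ln u1 - ln m1) - (u0 + u1) * (ln (u0 + u1) - ln M))
                      + (v0 * (ln v0 - ln m0) + v1 * (ln v1 - ln m1) - (v0 + v1) * (ln (v0 + v1) - ln M))"
      unfolding gap_def split_entropy_def M_def[symmetric] by (simp add: algebra_simps)
    have "u0 * v1 = u1 * v0" if "gap = 0"
    proof -
      have "(u0 + u1) * (ln (u0 + u1) - ln M) = u0 * (ln u0 - ln m0) + u1 * (ln u1 - ln m1)"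
        "(v0 + v1) * (ln (v0 + v1) - ln M) = v0 * (ln v0 - ln m0) + v1 * (ln v1 - ln m1)"
        using u(1) v(1) gap_eq that by linarith+
      then have "u0 * M = m0 * (u0 + u1)" "u1 * M = m1 * (u0 + u1)"
        "v0 * M = m0 * (v0 + v1)" "v1 * M = m1 * (v0 + v1)"
        using u(2) v(2) by blast+
      then have "(u0 * v1) * (M * M) = (u1 * v0) * (M * M)"
        by (metis mult.assoc mult.left_commute)
      then show ?thesis using M by (simp add: M_def)
    qed
    then show ?thesis using u(1) v(1) gap_eq by linarith
  qed
  then show "split_entropy u0 u1 + split_entropy v0 v1 \<le> 2 * split_entropy ((u0 + v0) / 2) ((u1 + v1) / 2)"
    and "split_entropy u0 u1 + split_entropy v0 v1 = 2 * split_entropy ((u0 + v0) / 2) ((u1 + v1) / 2)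
           \<Longrightarrow> u0 * v1 = u1 * v0"
    by (auto simp: gap_def m0_def m1_def)
qed

lemma sum_zero_one: "sum f {0::nat, 1} = f 0 + f 1"
  by simp

lemma cond_entropy_eq_split_entropy:
  assumes "\<forall>t x y. 0 \<le> Q t x y"
  shows "cond_entropy Q = (\<Sum>x\<in>{0,1}. \<Sum>y\<in>{0,1}. split_entropy (Q 0 x y) (Q 1 x y)) / ln 2"
proof -
  have cell: "(if Q 0 x y = 0 then 0 else Q 0 x y * log 2 (Q 0 x y / (Q 0 x y + Q 1 x y)))
      + (if Q 1 x y = 0 then 0 else Q 1 x y * log 2 (Q 1 x y / (Q 0 x y + Q 1 x y)))
      = - split_entropy (Q 0 x y) (Q 1 x y) / ln 2" for x y
    using assms by (intro split_entropy_eq_log_terms) auto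
  show ?thesis
    unfolding cond_entropy_def marg_XY_def sum_zero_one
    using cell[of 0 0] cell[of 0 1] cell[of 1 0] cell[of 1 1] by (simp add: field_simps)
qed

lemma joint_distsD:
  assumes "Q \<in> joint_dists"
  shows "0 \<le> Q t x y"
    and "Q t x y \<noteq> 0 \<Longrightarrow> t \<in> {0,1} \<and> x \<in> {0,1} \<and> y \<in> {0,1}"
    and "Q 0 0 0 + Q 0 0 1 + Q 0 1 0 + Q 0 1 1 + Q 1 0 0 + Q 1 0 1 + Q 1 1 0 + Q 1 1 1 = 1"
  using assms unfolding joint_dists_def sum_zero_one by (simp_all add: add.assoc)

text \<open>
  Adding \<open>z\<^sub>t\<close> to the diagonal and subtracting it from the antidiagonal of the \<open>2 \<times> 2\<close> table
  of \<open>(X,Y)\<close> given \<open>T = t\<close> preserves both the \<open>(X,T)\<close> and the \<open>(Y,T)\<close> marginals; these shifts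
  sweep out all of \<open>\<Delta>_P\<close>.
\<close>
definition marg_shift ::
    "(nat \<Rightarrow> nat \<Rightarrow> nat \<Rightarrow> real) \<Rightarrow> real \<times> real \<Rightarrow> nat \<Rightarrow> nat \<Rightarrow> nat \<Rightarrow> real" where
  "marg_shift Q z t x y = Q t x y +
     (if t \<in> {0,1} \<and> x \<in> {0,1} \<and> y \<in> {0,1}
      then (if t = 0 then fst z else snd z) * (if x = y then 1 else -1) else 0)"

lemma marg_shift_zero [simp]: "marg_shift Q 0 = Q"
  by (simp add: marg_shift_def fun_eq_iff)

lemma marg_XT_marg_shift [simp]: "marg_XT (marg_shift Q z) x t = marg_XT Q x t"
  by (auto simp: marg_XT_def marg_shift_def)

lemma marg_YT_marg_shift [simp]: "marg_YT (marg_shift Q z) y t = marg_YT Q y t"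
  by (auto simp: marg_YT_def marg_shift_def)

lemma marg_shift_in_Delta_P:
  assumes "P \<in> joint_dists" "\<forall>t x y. 0 \<le> marg_shift P z t x y"
  shows "marg_shift P z \<in> Delta_P P"
proof -
  have "marg_shift P z t x y \<noteq> 0 \<longrightarrow> t \<in> {0,1} \<and> x \<in> {0,1} \<and> y \<in> {0,1}" for t x y
    using joint_distsD(2)[OF assms(1), of t x y] by (auto simp: marg_shift_def)
  moreover have "(\<Sum>t\<in>{0,1}. \<Sum>x\<in>{0,1}. \<Sum>y\<in>{0,1}. marg_shift P z t x y) = 1"
    using joint_distsD(3)[OF assms(1)] by (simp add: marg_shift_def sum_zero_one)
  ultimately show ?thesis
    using assms(2) unfolding Delta_P_def joint_dists_def by simp
qed

lemma Delta_PD: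
  assumes "Q \<in> Delta_P P"
  shows "Q \<in> joint_dists"
    and "Q t x 0 + Q t x 1 = P t x 0 + P t x 1"
    and "Q t 0 y + Q t 1 y = P t 0 y + P t 1 y"
  using assms unfolding Delta_P_def marg_XT_def marg_YT_def sum_zero_one by auto

lemma Delta_P_eq_marg_shift:
  assumes "P \<in> joint_dists" "Q \<in> Delta_P P"
  shows "Q = marg_shift P (Q 0 0 0 - P 0 0 0, Q 1 0 0 - P 1 0 0)"
proof (intro ext)
  fix t x y
  show "Q t x y = marg_shift P (Q 0 0 0 - P 0 0 0, Q 1 0 0 - P 1 0 0) t x y"
  proof (cases "t \<in> {0,1} \<and> x \<in> {0,1} \<and> y \<in> {0,1}")
    case True
    then show ?thesis
      using Delta_PD(2)[OF assms(2), of t 0] Delta_PD(2)[OF assms(2), of t 1]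
        Delta_PD(3)[OF assms(2), of t 0]
      by (auto simp: marg_shift_def)
  next
    case False
    then have "P t x y = 0" "Q t x y = 0"
      using joint_distsD(2)[OF assms(1)] joint_distsD(2)[OF Delta_PD(1)[OF assms(2)]] by blast+
    then show ?thesis unfolding marg_shift_def if_not_P[OF False] by simp
  qed
qed

lemma continuous_on_marg_shift: "continuous_on S (\<lambda>z. marg_shift Q z t x y)"
proof (cases "t \<in> {0,1} \<and> x \<in> {0,1} \<and> y \<in> {0,1}")
  case True
  show ?thesis
    unfolding marg_shift_def if_P[OF True] by (cases "t = 0") (auto intro!: continuous_intros)
next
  case False
  show ?thesis
    unfolding marg_shift_def if_not_P[OF False] by simp
qed

lemma compact_nonneg_marg_shifts: "compact {z. \<forall>t x y. 0 \<le> marg_shift P z t x y}"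
proof -
  let ?S = "{z. \<forall>t x y. 0 \<le> marg_shift P z t x y}"
  have "closed ?S"
    by (intro closed_Collect_all closed_Collect_le continuous_on_const continuous_on_marg_shift)
  moreover have "?S \<subseteq> {- P 0 0 0 .. P 0 0 1} \<times> {- P 1 0 0 .. P 1 0 1}"
  proof
    fix z assume "z \<in> ?S"
    then have "0 \<le> marg_shift P z t x y" for t x y
      by simp
    from this[of 0 0 0] this[of 0 0 1] this[of 1 0 0] this[of 1 0 1]
    show "z \<in> {- P 0 0 0 .. P 0 0 1} \<times> {- P 1 0 0 .. P 1 0 1}"
      by (cases z) (auto simp: marg_shift_def)
  qed
  then have "bounded ?S"
    by (rule bounded_subset[OF compact_imp_bounded[OF compact_Times[OF compact_Icc compact_Icc]]])
  ultimately show ?thesis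
    by (simp add: compact_eq_bounded_closed)
qed

lemma argmax_cond_entropy_nonempty:
  assumes "P \<in> joint_dists"
  shows "\<exists>Q. Q \<in> argmax_cond_entropy P"
proof -
  define S where "S = {z. \<forall>t x y. 0 \<le> marg_shift P z t x y}"
  define F where "F z = (\<Sum>x\<in>{0,1}. \<Sum>y\<in>{0,1}.
      split_entropy (marg_shift P z 0 x y) (marg_shift P z 1 x y)) / ln 2" for z
  have entropy_F: "cond_entropy (marg_shift P z) = F z" if "z \<in> S" for z
    using that unfolding S_def F_def by (simp add: cond_entropy_eq_split_entropy)
  have "continuous_on S F"
    unfolding F_def
    by (intro continuous_intros continuous_on_split_entropy continuous_on_marg_shift) (auto simp: S_def)
  moreover have "0 \<in> S"
    using joint_distsD(1)[OF assms] by (simp add: S_def)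
  ultimately obtain z where z: "z \<in> S" "\<forall>z'\<in>S. F z' \<le> F z"
    using continuous_attains_sup[OF compact_nonneg_marg_shifts[of P, folded S_def]] by blast
  have "marg_shift P z \<in> argmax_cond_entropy P"
    unfolding argmax_cond_entropy_def
  proof (intro CollectI conjI ballI)
    show "marg_shift P z \<in> Delta_P P"
      using z(1) assms by (intro marg_shift_in_Delta_P) (auto simp: S_def)
    fix Q assume Q: "Q \<in> Delta_P P"
    define z' where "z' = (Q 0 0 0 - P 0 0 0, Q 1 0 0 - P 1 0 0)"
    have Q_eq: "Q = marg_shift P z'"
      unfolding z'_def using Delta_P_eq_marg_shift[OF assms Q] .
    then have "z' \<in> S"
      using joint_distsD(1)[OF Delta_PD(1)[OF Q]] by (simp add: S_def)
    then show "cond_entropy Q \<le> cond_entropy (marg_shift P z)"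
      using Q_eq z entropy_F by simp
  qed
  then show ?thesis by blast
qed

lemma Delta_P_midpoint:
  assumes "Q1 \<in> Delta_P P" "Q2 \<in> Delta_P P"
  shows "(\<lambda>t x y. (Q1 t x y + Q2 t x y) / 2) \<in> Delta_P P"
proof -
  let ?Q = "\<lambda>t x y. (Q1 t x y + Q2 t x y) / 2"
  have J1: "Q1 \<in> joint_dists" and J2: "Q2 \<in> joint_dists"
    using assms by (simp_all add: Delta_PD(1))
  have "?Q t x y \<noteq> 0 \<longrightarrow> t \<in> {0,1} \<and> x \<in> {0,1} \<and> y \<in> {0,1}" for t x y
  proof
    assume "?Q t x y \<noteq> 0"
    then have "Q1 t x y \<noteq> 0 \<or> Q2 t x y \<noteq> 0" by auto
    then show "t \<in> {0,1} \<and> x \<in> {0,1} \<and> y \<in> {0,1}"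
      using joint_distsD(2)[OF J1] joint_distsD(2)[OF J2] by blast
  qed
  moreover have "(\<Sum>t\<in>{0,1}. \<Sum>x\<in>{0,1}. \<Sum>y\<in>{0,1}. ?Q t x y) = 1"
    using joint_distsD(3)[OF J1] joint_distsD(3)[OF J2] unfolding sum_zero_one by (simp add: field_simps)
  ultimately have "?Q \<in> joint_dists"
    using joint_distsD(1)[OF J1] joint_distsD(1)[OF J2] unfolding joint_dists_def by simp
  moreover have "marg_XT ?Q x t = (marg_XT Q1 x t + marg_XT Q2 x t) / 2"
    and "marg_YT ?Q y t = (marg_YT Q1 y t + marg_YT Q2 y t) / 2" for x y t
    by (simp_all add: marg_XT_def marg_YT_def sum_zero_one field_simps)
  ultimately show ?thesis
    using assms unfolding Delta_P_def by simp
qed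

lemma cond_entropy_midpoint_eq_imp_proportional:
  assumes "\<forall>t x y. 0 \<le> Q1 t x y" "\<forall>t x y. 0 \<le> Q2 t x y"
    and "2 * cond_entropy (\<lambda>t x y. (Q1 t x y + Q2 t x y) / 2) \<le> cond_entropy Q1 + cond_entropy Q2"
    and "x \<in> {0,1}" "y \<in> {0,1}"
  shows "Q1 0 x y * Q2 1 x y = Q1 1 x y * Q2 0 x y"
proof -
  define gap where "gap x y =
      2 * split_entropy ((Q1 0 x y + Q2 0 x y) / 2) ((Q1 1 x y + Q2 1 x y) / 2)
        - split_entropy (Q1 0 x y) (Q1 1 x y) - split_entropy (Q2 0 x y) (Q2 1 x y)" for x y
  have gap_nonneg: "0 \<le> gap x y" for x y
    using split_entropy_midpoint(1)[of "Q1 0 x y" "Q1 1 x y" "Q2 0 x y" "Q2 1 x y"] assms(1,2)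
    by (simp add: gap_def)
  have mid_nonneg: "\<forall>t x y. 0 \<le> (Q1 t x y + Q2 t x y) / 2"
    using assms(1,2) by (simp add: add_nonneg_nonneg)
  have "2 * cond_entropy (\<lambda>t x y. (Q1 t x y + Q2 t x y) / 2) - cond_entropy Q1 - cond_entropy Q2
      = (gap 0 0 + gap 0 1 + gap 1 0 + gap 1 1) / ln 2"
    unfolding cond_entropy_eq_split_entropy[OF mid_nonneg] cond_entropy_eq_split_entropy[OF assms(1)]
      cond_entropy_eq_split_entropy[OF assms(2)]
    by (simp add: gap_def sum_zero_one field_simps)
  with assms(3) have "(gap 0 0 + gap 0 1 + gap 1 0 + gap 1 1) / ln 2 \<le> 0"
    by linarith
  then have "gap 0 0 + gap 0 1 + gap 1 0 + gap 1 1 \<le> 0"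
    by (simp add: divide_le_0_iff)
  with gap_nonneg[of 0 0] gap_nonneg[of 0 1] gap_nonneg[of 1 0] gap_nonneg[of 1 1] assms(4,5)
  have "gap x y = 0"
    by auto
  then show ?thesis
    using split_entropy_midpoint(2)[of "Q1 0 x y" "Q1 1 x y" "Q2 0 x y" "Q2 1 x y"] assms(1,2)
    by (simp add: gap_def)
qed

lemma argmax_cond_entropy_proportional:
  assumes "Q1 \<in> argmax_cond_entropy P" "Q2 \<in> argmax_cond_entropy P" "x \<in> {0,1}" "y \<in> {0,1}"
  shows "Q1 0 x y * Q2 1 x y = Q1 1 x y * Q2 0 x y"
proof -
  have Q1: "Q1 \<in> Delta_P P" and Q2: "Q2 \<in> Delta_P P"
    and "cond_entropy Q1 = cond_entropy Q2"
    using assms(1,2) unfolding argmax_cond_entropy_def by (auto intro: order.antisym)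
  moreover have "cond_entropy (\<lambda>t x y. (Q1 t x y + Q2 t x y) / 2) \<le> cond_entropy Q1"
    using assms(1) Delta_P_midpoint[OF Q1 Q2] unfolding argmax_cond_entropy_def by blast
  ultimately show ?thesis
    using joint_distsD(1)[OF Delta_PD(1)[OF Q1]] joint_distsD(1)[OF Delta_PD(1)[OF Q2]] assms(3,4)
    by (intro cond_entropy_midpoint_eq_imp_proportional) auto
qed

lemma marg_T_eq_marg_XT: "marg_T Q t = marg_XT Q 0 t + marg_XT Q 1 t"
  by (simp add: marg_T_def marg_XT_def)

text \<open>
  Proportionality in every cell gives \<open>Q(0,x,y) d\<^sub>1 = Q(1,x,y) d\<^sub>0\<close>; summing over the cells
  gives \<open>Q(T=0) d\<^sub>1 = Q(T=1) d\<^sub>0\<close>, so \<open>d\<^sub>0 \<noteq> 0\<close> and \<open>Q(\<cdot>,x,y)\<close> is proportional to \<open>(Q(T=0), Q(T=1))\<close>.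
\<close>
lemma proportional_marg_shift_imp_indep:
  assumes proportional: "\<And>x y. x \<in> {0,1} \<Longrightarrow> y \<in> {0,1} \<Longrightarrow>
      Q 0 x y * marg_shift Q z 1 x y = Q 1 x y * marg_shift Q z 0 x y"
    and "0 < marg_T Q 0" "0 < marg_T Q 1" "z \<noteq> 0"
  shows "marg_XT Q 0 0 / marg_T Q 0 = marg_XT Q 0 1 / marg_T Q 1
       \<and> marg_YT Q 0 0 / marg_T Q 0 = marg_YT Q 0 1 / marg_T Q 1"
proof -
  obtain d0 d1 where z: "z = (d0, d1)" by (cases z)
  define p0 where "p0 = marg_T Q 0"
  define p1 where "p1 = marg_T Q 1"
  have p0: "p0 = Q 0 0 0 + Q 0 0 1 + Q 0 1 0 + Q 0 1 1"
    and p1: "p1 = Q 1 0 0 + Q 1 0 1 + Q 1 1 0 + Q 1 1 1"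
    by (simp_all add: p0_def p1_def marg_T_def sum_zero_one)
  have cell: "Q 0 x y * d1 = Q 1 x y * d0" if "x \<in> {0,1}" "y \<in> {0,1}" for x y
  proof -
    have "(if x = y then 1 else -1) * (Q 0 x y * d1 - Q 1 x y * d0) = 0"
      using proportional[OF that] that by (simp add: marg_shift_def z algebra_simps)
    then show ?thesis by (simp split: if_splits)
  qed
  have "p0 * d1 = p1 * d0"
    unfolding p0 p1 using cell[of 0 0] cell[of 0 1] cell[of 1 0] cell[of 1 1]
    by (simp add: algebra_simps)
  moreover have "0 < p0" "0 < p1"
    using assms(2,3) by (simp_all add: p0_def p1_def)
  ultimately have "d0 \<noteq> 0"
    using assms(4) z by (auto simp: zero_prod_def)
  have indep: "Q 0 x y * p1 = Q 1 x y * p0" if "x \<in> {0,1}" "y \<in> {0,1}" for x y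
  proof -
    have "(Q 0 x y * p1) * d0 = (Q 1 x y * p0) * d0"
      using cell[OF that] \<open>p0 * d1 = p1 * d0\<close> by (metis mult.assoc mult.commute)
    then show ?thesis using \<open>d0 \<noteq> 0\<close> by simp
  qed
  have "marg_XT Q 0 0 * p1 = marg_XT Q 0 1 * p0" "marg_YT Q 0 0 * p1 = marg_YT Q 0 1 * p0"
    using indep[of 0 0] indep[of 0 1] indep[of 1 0]
    by (simp_all add: marg_XT_def marg_YT_def algebra_simps)
  with \<open>0 < p0\<close> \<open>0 < p1\<close> show ?thesis
    unfolding p0_def p1_def by (simp add: field_simps)
qed

lemma argmax_cond_entropy_unique:
  assumes "0 < marg_T P 0" "0 < marg_T P 1"
    and "\<not> (marg_XT P 0 0 / marg_T P 0 = marg_XT P 0 1 / marg_T P 1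
            \<and> marg_YT P 0 0 / marg_T P 0 = marg_YT P 0 1 / marg_T P 1)"
    and "Q1 \<in> argmax_cond_entropy P" "Q2 \<in> argmax_cond_entropy P"
  shows "Q1 = Q2"
proof -
  have Q1: "Q1 \<in> Delta_P P" and Q2: "Q2 \<in> Delta_P P"
    using assms(4,5) by (simp_all add: argmax_cond_entropy_def)
  then have same_margs: "marg_XT Q1 = marg_XT P" "marg_YT Q1 = marg_YT P" "marg_T Q1 = marg_T P"
    by (auto simp: Delta_P_def fun_eq_iff marg_T_eq_marg_XT)
  define z where "z = (Q2 0 0 0 - Q1 0 0 0, Q2 1 0 0 - Q1 1 0 0)"
  have "Q2 \<in> Delta_P Q1"
    using Q1 Q2 by (simp add: Delta_P_def)
  then have Q2_eq: "Q2 = marg_shift Q1 z"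
    unfolding z_def by (rule Delta_P_eq_marg_shift[OF Delta_PD(1)[OF Q1]])
  have "z = 0"
  proof (rule ccontr)
    assume "z \<noteq> 0"
    with argmax_cond_entropy_proportional[OF assms(4,5)] assms(1,2) same_margs
    have "marg_XT P 0 0 / marg_T P 0 = marg_XT P 0 1 / marg_T P 1
        \<and> marg_YT P 0 0 / marg_T P 0 = marg_YT P 0 1 / marg_T P 1"
      using proportional_marg_shift_imp_indep[of Q1 z] Q2_eq by simp
    with assms(3) show False ..
  qed
  with Q2_eq show ?thesis by simp
qed

theorem mainTheorem17:
  fixes P :: "nat \<Rightarrow> nat \<Rightarrow> nat \<Rightarrow> real"
  assumes "P \<in> joint_dists"
    and "marg_T P 0 > 0" and "marg_T P 1 > 0"
    and "\<not> (marg_XT P 0 0 / marg_T P 0 = marg_XT P 0 1 / marg_T P 1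
            \<and> marg_YT P 0 0 / marg_T P 0 = marg_YT P 0 1 / marg_T P 1)"
  shows "\<exists>Q. argmax_cond_entropy P = {Q}"
proof -
  obtain Q where "Q \<in> argmax_cond_entropy P"
    using argmax_cond_entropy_nonempty[OF assms(1)] by blast
  with argmax_cond_entropy_unique[OF assms(2-4)] have "argmax_cond_entropy P = {Q}"
    by blast
  then show ?thesis by blast
qed

end
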